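(* Let $m$ be a $\mathbb T$-automaton over input alphabet $A_\tau=A\cup\{\tau\}$ with state set $X$, whose output algebra $B$ is also an $\omega$-additive monoid. Then for all $x_0\in X$, $a\in A$, $u\in A^*$: $\llbracket x_0\rrbracket^\tau_m(\epsilon)=o^m(x_0)+\sum_{i=1}^\infty a^m\big(\mathsf{do}\ x_1\leftarrow t^m(x_0,\tau);\dots;x_i\leftarrow t^m(x_{i-1},\tau);\ \eta_B(o^m(x_i))\big)$ and $\llbracket x_0\rrbracket^\tau_m(au)=\sum_{i=1}^\infty a^m\big(\mathsf{do}\ x_1\leftarrow t^m(x_0,\tau);\dots;x_{i-1}\leftarrow t^m(x_{i-2},\tau);x_i\leftarrow t^m(x_{i-1},a);\ \eta_B(\llbracket x_i\rrbracket^\tau_m(u))\big)$.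
   Context: $\mathsf{do}\ y\leftarrow p;\ q(y)$ denotes $q^\dagger(p)$ (Kleisli extension of the monad in question). An $\omega$-additive monoid is an algebra for the countably supported multiset monad (commutative monoid with countable sums). A $\mathbb T$-automaton over $A_\tau$: set $X$, $\mathbb T$-algebra $a^m:TB\to B$, $o^m:X\to B$, $t^m:A_\tau\times X\to TX$. Let $T_BX=B^{(B^X)}$ be the continuation monad ($\eta(x)=\lambda f.f(x)$, $f^\dagger(k)=\lambda c.k(\lambda x.f(x)(c))$), $\kappa_X:TX\to T_BX$, $\kappa_X(p)=\lambda f.a^m(Tf(p))$, $t^{m_*}=\kappa_X\circ t^m$, $o^{m_*}=o^m$; $T_BX$ is an $\omega$-additive monoid pointwise. Define the $\mathbb T_B$-automaton $m_v$ over $A$ with algebra $a^{m_v}(k)=k(\mathrm{id}_B)$, $t^{m_v}(x_0,a)=\sum_{i\ge1}\mathsf{do}\ x_1\leftarrow t^{m_*}(x_0,\tau);\dots;x_{i-1}\leftarrow t^{m_*}(x_{i-2},\tau);\ t^{m_*}(x_{i-1},a)$ and $o^{m_v}(x_0)=o^{m_*}(x_0)+\sum_{i\ge1}\big(\mathsf{do}\ x_1\leftarrow t^{m_*}(x_0,\tau);\dots;\ t^{m_*}(x_{i-1},\tau)\big)(o^{m_*})$. The observational trace semantics is $\llbracket x\rrbracket^\tau_m=\llbracket x\rrbracket_{m_v}$, where for any monad $\mathbb S$ and $\mathbb S$-automaton $n$ (algebra $a^n$, maps $o^n,t^n$) the trace semantics is determined by $\llbracket x\rrbracket_n(\epsilon)=o^n(x)$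 and $\llbracket x\rrbracket_n(au)=a^n(\mathsf{do}\ y\leftarrow t^n(a,x);\ \eta(\llbracket y\rrbracket_n(u)))$. *)

theory Defs
  imports Main "HOL-Library.Nat_Bijection"
begin

text \<open>Isabelle/HOL cannot quantify over type constructors, so the monad T is given by
  its action on the two objects that occur: TX (type 'tx) and TB (type 'tb), with units
  and Kleisli extensions between them.\<close>

definition monad_fragment ::
  "('x \<Rightarrow> 'tx) \<Rightarrow> ('b \<Rightarrow> 'tb) \<Rightarrow>
   ('tx \<Rightarrow> ('x \<Rightarrow> 'tx) \<Rightarrow> 'tx) \<Rightarrow>
   ('tx \<Rightarrow> ('x \<Rightarrow> 'tb) \<Rightarrow> 'tb) \<Rightarrow>
   ('tb \<Rightarrow> ('b \<Rightarrow> 'tb) \<Rightarrow> 'tb) \<Rightarrow> bool" where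
  "monad_fragment retX retB bindXX bindXB bindBB \<longleftrightarrow>
     (\<forall>x f. bindXX (retX x) f = f x) \<and>
     (\<forall>x f. bindXB (retX x) f = f x) \<and>
     (\<forall>b f. bindBB (retB b) f = f b) \<and>
     (\<forall>p. bindXX p retX = p) \<and>
     (\<forall>q. bindBB q retB = q) \<and>
     (\<forall>p f g. bindXX (bindXX p f) g = bindXX p (\<lambda>x. bindXX (f x) g)) \<and>
     (\<forall>p f g. bindXB (bindXX p f) g = bindXB p (\<lambda>x. bindXB (f x) g)) \<and>
     (\<forall>p f g. bindBB (bindXB p f) g = bindXB p (\<lambda>x. bindBB (f x) g)) \<and>
     (\<forall>q f g. bindBB (bindBB q f) g = bindBB q (\<lambda>b. bindBB (f b) g))"

text \<open>T-algebra a : TB \<Rightarrow> B (Eilenberg-Moore laws in Kleisli form: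
  a \<circ> \<eta> = id and a \<circ> f\<dagger> = a \<circ> T(a \<circ> f)).\<close>

definition T_algebra ::
  "('b \<Rightarrow> 'tb) \<Rightarrow> ('tx \<Rightarrow> ('x \<Rightarrow> 'tb) \<Rightarrow> 'tb) \<Rightarrow>
   ('tb \<Rightarrow> ('b \<Rightarrow> 'tb) \<Rightarrow> 'tb) \<Rightarrow> ('tb \<Rightarrow> 'b) \<Rightarrow> bool" where
  "T_algebra retB bindXB bindBB alg \<longleftrightarrow>
     (\<forall>b. alg (retB b) = b) \<and>
     (\<forall>p f. alg (bindXB p f) = alg (bindXB p (\<lambda>x. retB (alg (f x))))) \<and>
     (\<forall>q f. alg (bindBB q f) = alg (bindBB q (\<lambda>b. retB (alg (f b)))))"

text \<open>Countable sums are represented on nat-indexed families (any countable multiset is the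
  multiset of values of such a family, padded with zeros).\<close>

definition omega_additive :: "'b \<Rightarrow> ((nat \<Rightarrow> 'b) \<Rightarrow> 'b) \<Rightarrow> bool" where
  "omega_additive z S \<longleftrightarrow>
     (\<forall>b. S (\<lambda>i. if i = 0 then b else z) = b) \<and>
     (\<forall>f \<pi>. bij \<pi> \<longrightarrow> S (f \<circ> \<pi>) = S f) \<and>
     (\<forall>g. S (\<lambda>n. S (g n)) = S (\<lambda>k. case prod_decode k of (n, m) \<Rightarrow> g n m))"

definition oplus :: "'b \<Rightarrow> ((nat \<Rightarrow> 'b) \<Rightarrow> 'b) \<Rightarrow> 'b \<Rightarrow> 'b \<Rightarrow> 'b" where
  "oplus z S b c = S (\<lambda>i. if i = 0 then b else if i = 1 then c else z)"

definition ceta :: "'x \<Rightarrow> ('x \<Rightarrow> 'b) \<Rightarrow> 'b" where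
  "ceta x = (\<lambda>f. f x)"

definition cbind :: "(('x \<Rightarrow> 'b) \<Rightarrow> 'b) \<Rightarrow> ('x \<Rightarrow> ('y \<Rightarrow> 'b) \<Rightarrow> 'b) \<Rightarrow> ('y \<Rightarrow> 'b) \<Rightarrow> 'b" where
  "cbind k f = (\<lambda>c. k (\<lambda>x. f x c))"

definition kappa :: "('b \<Rightarrow> 'tb) \<Rightarrow> ('tx \<Rightarrow> ('x \<Rightarrow> 'tb) \<Rightarrow> 'tb) \<Rightarrow> ('tb \<Rightarrow> 'b)
    \<Rightarrow> 'tx \<Rightarrow> ('x \<Rightarrow> 'b) \<Rightarrow> 'b" where
  "kappa retB bindXB alg p = (\<lambda>f. alg (bindXB p (\<lambda>x. retB (f x))))"

section \<open>Automata.  Input alphabet A_tau = 'a option, tau = None, A = Some ` UNIV.\<close>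

text \<open>tau_chain bind t n g x0 = do x1 <- t(x0,tau); ...; xn <- t(x(n-1),tau); g(xn)\<close>

primrec tau_chain :: "('m \<Rightarrow> ('x \<Rightarrow> 'n) \<Rightarrow> 'n) \<Rightarrow> ('a option \<Rightarrow> 'x \<Rightarrow> 'm) \<Rightarrow> nat
    \<Rightarrow> ('x \<Rightarrow> 'n) \<Rightarrow> 'x \<Rightarrow> 'n" where
  "tau_chain bind t 0 g x = g x"
| "tau_chain bind t (Suc n) g x = bind (t None x) (tau_chain bind t n g)"

text \<open>Trace semantics of an S-automaton (S given by its unit ret and Kleisli extension bind).\<close>

primrec trace :: "('b \<Rightarrow> 'n) \<Rightarrow> ('m \<Rightarrow> ('x \<Rightarrow> 'n) \<Rightarrow> 'n) \<Rightarrow> ('n \<Rightarrow> 'b)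
    \<Rightarrow> ('x \<Rightarrow> 'b) \<Rightarrow> ('a \<Rightarrow> 'x \<Rightarrow> 'm) \<Rightarrow> 'a list \<Rightarrow> 'x \<Rightarrow> 'b" where
  "trace ret bind alg out t [] x = out x"
| "trace ret bind alg out t (a # u) x = alg (bind (t a x) (\<lambda>y. ret (trace ret bind alg out t u y)))"

definition tstar :: "('b \<Rightarrow> 'tb) \<Rightarrow> ('tx \<Rightarrow> ('x \<Rightarrow> 'tb) \<Rightarrow> 'tb) \<Rightarrow> ('tb \<Rightarrow> 'b)
    \<Rightarrow> ('a option \<Rightarrow> 'x \<Rightarrow> 'tx) \<Rightarrow> 'a option \<Rightarrow> 'x \<Rightarrow> ('x \<Rightarrow> 'b) \<Rightarrow> 'b" where
  "tstar retB bindXB alg t a x = kappa retB bindXB alg (t a x)"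

definition tv :: "((nat \<Rightarrow> 'b) \<Rightarrow> 'b) \<Rightarrow> ('b \<Rightarrow> 'tb) \<Rightarrow> ('tx \<Rightarrow> ('x \<Rightarrow> 'tb) \<Rightarrow> 'tb)
    \<Rightarrow> ('tb \<Rightarrow> 'b) \<Rightarrow> ('a option \<Rightarrow> 'x \<Rightarrow> 'tx) \<Rightarrow> 'a \<Rightarrow> 'x \<Rightarrow> ('x \<Rightarrow> 'b) \<Rightarrow> 'b" where
  "tv S retB bindXB alg t a x0 =
     (\<lambda>c. S (\<lambda>n. tau_chain cbind (tstar retB bindXB alg t) n
                   (tstar retB bindXB alg t (Some a)) x0 c))"
  \<comment> \<open>summand n corresponds to i = n + 1 in the paper\<close>

definition ov :: "'b \<Rightarrow> ((nat \<Rightarrow> 'b) \<Rightarrow> 'b) \<Rightarrow> ('b \<Rightarrow> 'tb) \<Rightarrow> ('tx \<Rightarrow> ('x \<Rightarrow> 'tb) \<Rightarrow> 'tb)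
    \<Rightarrow> ('tb \<Rightarrow> 'b) \<Rightarrow> ('x \<Rightarrow> 'b) \<Rightarrow> ('a option \<Rightarrow> 'x \<Rightarrow> 'tx) \<Rightarrow> 'x \<Rightarrow> 'b" where
  "ov z S retB bindXB alg out t x0 =
     oplus z S (out x0)
       (S (\<lambda>n. tau_chain cbind (tstar retB bindXB alg t) n
                 (tstar retB bindXB alg t None) x0 out))"

text \<open>Observational trace semantics [[x]]^tau_m = [[x]]_{m_v}; algebra of m_v is k \<mapsto> k id.\<close>

definition obs_trace :: "'b \<Rightarrow> ((nat \<Rightarrow> 'b) \<Rightarrow> 'b) \<Rightarrow> ('b \<Rightarrow> 'tb) \<Rightarrow> ('tx \<Rightarrow> ('x \<Rightarrow> 'tb) \<Rightarrow> 'tb)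
    \<Rightarrow> ('tb \<Rightarrow> 'b) \<Rightarrow> ('x \<Rightarrow> 'b) \<Rightarrow> ('a option \<Rightarrow> 'x \<Rightarrow> 'tx) \<Rightarrow> 'a list \<Rightarrow> 'x \<Rightarrow> 'b" where
  "obs_trace z S retB bindXB alg out t =
     trace ceta cbind (\<lambda>k. k id) (ov z S retB bindXB alg out t) (tv S retB bindXB alg t)"

end

theory Submission
  imports Defs
begin

text \<open>
  The observational trace semantics is the ordinary trace semantics of the
  automaton m_v over the continuation monad T_B, whose transitions and outputs are countable
  sums of chains of tau-steps in T_B.  The theorem says that each such summand, evaluated in
  T_B, equals the corresponding chain in T followed by the T-algebra.  This rests on three
  general facts about chains of tau-steps:
   (1) a chain of n+1 steps is a chain of n steps followed by one more step;
   (2) under a T-algebra, an inner "alg then return" inside a chain may be dropped;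
   (3) running a chain in T_B (transitions \<kappa> \<circ> t) and evaluating at a continuation c equals
       the algebra applied to the chain in T whose final step returns c.
  Combining (2) and (3) gives a closed form for the summands of t^{m_v} and o^{m_v}; the two
  clauses of the theorem are then the defining equations of the trace semantics rewritten
  with this closed form, proved separately for the empty and non-empty input words.
\<close>

lemma tau_chain_0: "tau_chain bind t 0 g = g"
  by (rule ext) simp

lemma tau_chain_Suc_last:
  "tau_chain bind t (Suc n) g = tau_chain bind t n (\<lambda>y. bind (t None y) g)"
proof (induction n arbitrary: g)
  case 0
  show ?case by (simp add: fun_eq_iff tau_chain_0)
next
  case (Suc n)
  have "tau_chain bind t (Suc (Suc n)) g = (\<lambda>x. bind (t None x) (tau_chain bind t (Suc n) g))"
    by (rule ext) simp
  also have "\<dots> = (\<lambda>x. bind (t None x) (tau_chain bind t n (\<lambda>y. bind (t None y) g)))"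
    by (simp only: Suc)
  also have "\<dots> = tau_chain bind t (Suc n) (\<lambda>y. bind (t None y) g)"
    by (rule ext) simp
  finally show ?case .
qed

lemma tstar_apply:
  "tstar retB bindXB alg t b x c = alg (bindXB (t b x) (\<lambda>y. retB (c y)))"
  by (simp add: tstar_def kappa_def)

text \<open>Fact (2): inside a chain of tau-steps, the algebra absorbs an inner application of
  "alg, then return", by the Eilenberg-Moore law a \<circ> f\<dagger> = a \<circ> T(a \<circ> f).\<close>

lemma alg_tau_chain_absorb:
  assumes alg: "T_algebra retB bindXB bindBB alg"
  shows "alg (tau_chain bindXB t n (\<lambda>y. retB (alg (h y))) x) = alg (tau_chain bindXB t n h x)"
proof (induction n arbitrary: x)
  case 0
  show ?case using alg by (simp add: T_algebra_def)
next
  case (Suc n)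
  have "alg (tau_chain bindXB t (Suc n) (\<lambda>y. retB (alg (h y))) x)
      = alg (bindXB (t None x) (\<lambda>y. retB (alg (tau_chain bindXB t n (\<lambda>y. retB (alg (h y))) y))))"
    using alg by (simp add: T_algebra_def)
  also have "\<dots> = alg (bindXB (t None x) (\<lambda>y. retB (alg (tau_chain bindXB t n h y))))"
    by (simp add: Suc)
  also have "\<dots> = alg (tau_chain bindXB t (Suc n) h x)"
    using alg by (simp add: T_algebra_def)
  finally show ?case .
qed

lemma tau_chain_tstar_eval:
  assumes alg: "T_algebra retB bindXB bindBB alg"
  shows "tau_chain cbind (tstar retB bindXB alg t) n g x c
       = alg (tau_chain bindXB t n (\<lambda>y. retB (g y c)) x)"
proof (induction n arbitrary: x)
  case 0
  show ?case using alg by (simp add: T_algebra_def)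
next
  case (Suc n)
  have "tau_chain cbind (tstar retB bindXB alg t) (Suc n) g x c
      = alg (bindXB (t None x) (\<lambda>y. retB (tau_chain cbind (tstar retB bindXB alg t) n g y c)))"
    by (simp add: cbind_def tstar_apply)
  also have "\<dots> = alg (bindXB (t None x)
                     (\<lambda>y. retB (alg (tau_chain bindXB t n (\<lambda>y. retB (g y c)) y))))"
    by (simp add: Suc)
  also have "\<dots> = alg (tau_chain bindXB t (Suc n) (\<lambda>y. retB (g y c)) x)"
    using alg by (simp add: T_algebra_def)
  finally show ?case .
qed

text \<open>Closed form of the summands of t^{m_v} and o^{m_v}: n tau-steps followed by a step on
  input b of m_*, evaluated at c, is the algebra applied to the corresponding chain in T.\<close>

lemma tau_chain_tstar_step:
  assumes alg: "T_algebra retB bindXB bindBB alg"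
  shows "tau_chain cbind (tstar retB bindXB alg t) n (tstar retB bindXB alg t b) x c
       = alg (tau_chain bindXB t n (\<lambda>y. bindXB (t b y) (\<lambda>x. retB (c x))) x)"
  by (simp only: tau_chain_tstar_eval[OF alg] tstar_apply alg_tau_chain_absorb[OF alg])

lemma obs_trace_Nil:
  assumes alg: "T_algebra retB bindXB bindBB alg"
  shows "obs_trace z S retB bindXB alg out t [] x0 =
           oplus z S (out x0)
             (S (\<lambda>n. alg (tau_chain bindXB t (Suc n) (\<lambda>x. retB (out x)) x0)))"
  unfolding obs_trace_def trace.simps(1) ov_def
  by (simp only: tau_chain_tstar_step[OF alg] tau_chain_Suc_last)

lemma obs_trace_Cons:
  assumes alg: "T_algebra retB bindXB bindBB alg"
  shows "obs_trace z S retB bindXB alg out t (a # u) x0 =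
           S (\<lambda>n. alg (tau_chain bindXB t n
                (\<lambda>y. bindXB (t (Some a) y)
                        (\<lambda>x. retB (obs_trace z S retB bindXB alg out t u x))) x0))"
proof -
  let ?obs = "obs_trace z S retB bindXB alg out t"
  have "?obs (a # u) x0 = tv S retB bindXB alg t a x0 (?obs u)"
    unfolding obs_trace_def trace.simps(2) cbind_def ceta_def id_def ..
  then show ?thesis
    by (simp only: tv_def tau_chain_tstar_step[OF alg])
qed

theorem mainTheorem13:
  fixes retX :: "'x \<Rightarrow> 'tx" and retB :: "'b \<Rightarrow> 'tb"
    and bindXX :: "'tx \<Rightarrow> ('x \<Rightarrow> 'tx) \<Rightarrow> 'tx"
    and bindXB :: "'tx \<Rightarrow> ('x \<Rightarrow> 'tb) \<Rightarrow> 'tb"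
    and bindBB :: "'tb \<Rightarrow> ('b \<Rightarrow> 'tb) \<Rightarrow> 'tb"
    and alg :: "'tb \<Rightarrow> 'b"
    and z :: 'b and S :: "(nat \<Rightarrow> 'b) \<Rightarrow> 'b"
    and out :: "'x \<Rightarrow> 'b"
    and t :: "'a option \<Rightarrow> 'x \<Rightarrow> 'tx"
    and x0 :: 'x and a :: 'a and u :: "'a list"
  assumes "monad_fragment retX retB bindXX bindXB bindBB"
    and "T_algebra retB bindXB bindBB alg"
    and "omega_additive z S"
  shows "obs_trace z S retB bindXB alg out t [] x0 =
           oplus z S (out x0)
             (S (\<lambda>n. alg (tau_chain bindXB t (Suc n) (\<lambda>x. retB (out x)) x0))) \<and>
         obs_trace z S retB bindXB alg out t (a # u) x0 =
           S (\<lambda>n. alg (tau_chain bindXB t n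
                (\<lambda>y. bindXB (t (Some a) y)
                        (\<lambda>x. retB (obs_trace z S retB bindXB alg out t u x))) x0))"
  using assms(2) by (intro conjI obs_trace_Nil obs_trace_Cons)

end
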